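(* Let $X\in\mathbb{R}^{N\times D}$ with rows $x_n^\top$ have SVD $X^\top=U\mathrm{diag}(\lambda)V^\top+\bar U\mathrm{diag}(\bar\lambda)\bar V^\top$ where $U\in\mathbb{R}^{D\times M}$ holds the top-$M$ right singular vectors, $[U,\bar U]$ is orthogonal, $\lambda_1$ is the largest singular value and $\bar\lambda_1$ the $(M+1)$-st largest singular value (zero if none). Let $\phi(y,a)$ be twice differentiable in $a$, let $p(\beta)$ be a twice differentiable prior, and consider the exact posterior $\log p(\beta\mid X,Y)=\log p(\beta)+\sum_n\phi(y_n,x_n^\top\beta)+\mathrm{const}$ and the approximate posterior $\log\tilde p(\beta\mid X,Y)=\log p(\beta)+\sum_n\phi(y_n,x_n^\top UU^\top\beta)+\mathrm{const}$, with maximizers $\bar\mu$ and $\hat\mu$ respectively. Assume $-\log p(\beta\mid X,Y)$ is $\alpha$-strongly convex ($\alpha>0$). Then there is $A\in\mathbb{R}^N$ with each $A_n$ lying between $x_n^\top UU^\top\hat\mu$ and $x_n^\top\hat\mu$ such that $$\|\hat\mu-\bar\mu\|_2\le\frac{\bar\lambda_1\big(\|\vec\phi'(Y,X\hat\mu)\|_2+\lambda_1\|\bar U^\top\hat\mu\|_2\,\|\vec\phi''(Y,A)\|_\infty\big)}{\alpha}.$$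
   Context: For $B\in\mathbb{R}^N$, $\vec\phi'(Y,B)$ and $\vec\phi''(Y,B)$ are the vectors with entries $\frac{\partial}{\partial a}\phi(y_n,a)|_{a=B_n}$ and $\frac{\partial^2}{\partial a^2}\phi(y_n,a)|_{a=B_n}$. *)

theory Defs
  imports "HOL-Analysis.Analysis"
begin

definition strongly_convex :: "real \<Rightarrow> ('a::real_normed_vector \<Rightarrow> real) \<Rightarrow> bool" where
  "strongly_convex \<alpha> F \<longleftrightarrow>
     (\<forall>x y. \<forall>t::real. 0 \<le> t \<longrightarrow> t \<le> 1 \<longrightarrow>
        F (t *\<^sub>R x + (1 - t) *\<^sub>R y)
          \<le> t * F x + (1 - t) * F y - \<alpha> / 2 * t * (1 - t) * (norm (x - y))\<^sup>2)"

text \<open>Singular value decomposition of the data matrix X (N rows x n, n < N, in R^D, D = CARD('d)):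
  X^T = sum over j < D of s_j w_j v_j^T, with (w_j) an orthonormal basis of R^D (the matrix [U, Ubar]),
  singular values s_j nonnegative and sorted decreasingly, and the left vectors v_j in R^N orthonormal
  (those belonging to nonzero singular values; the others do not contribute).\<close>
definition svd_decomp ::
  "nat \<Rightarrow> (nat \<Rightarrow> real^'d) \<Rightarrow> (nat \<Rightarrow> real) \<Rightarrow> (nat \<Rightarrow> real^'d) \<Rightarrow> (nat \<Rightarrow> nat \<Rightarrow> real) \<Rightarrow> bool" where
  "svd_decomp N x s w v \<longleftrightarrow>
     (\<forall>j<CARD('d). \<forall>k<CARD('d). w j \<bullet> w k = (if j = k then 1 else 0)) \<and>
     (\<forall>j<CARD('d). 0 \<le> s j) \<and>
     (\<forall>j k. j \<le> k \<longrightarrow> k < CARD('d) \<longrightarrow> s k \<le> s j) \<and>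
     (\<forall>j<CARD('d). \<forall>k<CARD('d). 0 < s j \<longrightarrow> 0 < s k \<longrightarrow>
         (\<Sum>n<N. v j n * v k n) = (if j = k then 1 else 0)) \<and>
     (\<forall>n<N. x n = (\<Sum>j<CARD('d). (s j * v j n) *\<^sub>R w j))"

text \<open>U U^T beta, where U = [w_0,...,w_{M-1}].\<close>
definition proj_top :: "nat \<Rightarrow> (nat \<Rightarrow> real^'d) \<Rightarrow> real^'d \<Rightarrow> real^'d" where
  "proj_top M w \<beta> = (\<Sum>j<M. (w j \<bullet> \<beta>) *\<^sub>R w j)"

text \<open>|| Ubar^T beta ||_2 where Ubar = [w_M,...,w_{D-1}].\<close>
definition norm_Ubar_T :: "nat \<Rightarrow> (nat \<Rightarrow> real^'d) \<Rightarrow> real^'d \<Rightarrow> real" where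
  "norm_Ubar_T M w \<beta> = sqrt (\<Sum>j\<in>{M..<CARD('d)}. (w j \<bullet> \<beta>)\<^sup>2)"

definition norm2N :: "nat \<Rightarrow> (nat \<Rightarrow> real) \<Rightarrow> real" where
  "norm2N N z = sqrt (\<Sum>n<N. (z n)\<^sup>2)"

definition norminfN :: "nat \<Rightarrow> (nat \<Rightarrow> real) \<Rightarrow> real" where
  "norminfN N z = Max (insert 0 ((\<lambda>n. \<bar>z n\<bar>) ` {..<N}))"

definition between :: "real \<Rightarrow> real \<Rightarrow> real \<Rightarrow> bool" where
  "between a b c \<longleftrightarrow> min a b \<le> c \<and> c \<le> max a b"

end

theory Submission
  imports Defs
begin

text \<open>
  Put \<open>h = \<mu>bar - \<mu>hat\<close>. Strong convexity of the exact negative log posterior \<open>F\<close> along the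
  segment from \<open>\<mu>hat\<close> to \<open>\<mu>bar\<close>, where \<open>\<nabla>F(\<mu>bar) = 0\<close>, gives
  \<open>\<alpha> |h|\<^sup>2 \<le> - \<nabla>F(\<mu>hat) \<bullet> h\<close>. As the approximate negative log posterior \<open>G\<close> satisfies
  \<open>\<nabla>G(\<mu>hat) = 0\<close>, the right-hand side equals \<open>(\<nabla>G - \<nabla>F)(\<mu>hat) \<bullet> h\<close>, where the prior cancels:
  \<open>\<Sum>\<^sub>n \<phi>'(x\<^sub>n\<^sup>T\<mu>hat) x\<^sub>n\<^sup>T h - \<phi>'(x\<^sub>n\<^sup>T U U\<^sup>T \<mu>hat) x\<^sub>n\<^sup>T U U\<^sup>T h\<close>.
  By the mean value theorem for \<open>\<phi>'\<close> this is
  \<open>\<Sum>\<^sub>n \<phi>'(x\<^sub>n\<^sup>T\<mu>hat) x\<^sub>n\<^sup>T Ubar Ubar\<^sup>T h + \<phi>''(A\<^sub>n) (x\<^sub>n\<^sup>T Ubar Ubar\<^sup>T \<mu>hat) (x\<^sub>n\<^sup>T U U\<^sup>T h)\<close>.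
  In the singular value decomposition, \<open>X Ubar Ubar\<^sup>T\<close> and \<open>X U U\<^sup>T\<close> have operator norms at most
  \<open>\<lambda>bar\<^sub>1\<close> and \<open>\<lambda>\<^sub>1\<close>, so Cauchy-Schwarz bounds the sum by \<open>|h|\<close> times the numerator of the claim.
\<close>

lemma norm2N_eq_L2_set: "norm2N N z = L2_set z {..<N}"
  by (simp add: norm2N_def L2_set_def)

lemma norm_Ubar_T_eq_L2_set:
  fixes w :: "nat \<Rightarrow> real^'d"
  shows "norm_Ubar_T M w \<beta> = L2_set (\<lambda>j. w j \<bullet> \<beta>) {M..<CARD('d)}"
  by (simp add: norm_Ubar_T_def L2_set_def)

lemma sum_mult_le_L2_set: "(\<Sum>i\<in>A. f i * g i) \<le> L2_set f A * L2_set g A"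
proof -
  have "(\<Sum>i\<in>A. f i * g i) \<le> (\<Sum>i\<in>A. \<bar>f i\<bar> * \<bar>g i\<bar>)"
    by (intro sum_mono) (simp flip: abs_mult)
  also have "\<dots> \<le> L2_set f A * L2_set g A"
    by (rule L2_set_mult_ineq)
  finally show ?thesis .
qed

lemma norminfN_nonneg: "0 \<le> norminfN N f"
  unfolding norminfN_def by (intro Max_ge) auto

lemma L2_set_mult_le_norminfN:
  "L2_set (\<lambda>n. f n * g n) {..<N} \<le> norminfN N f * L2_set g {..<N}"
proof -
  define m where "m = norminfN N f"
  have f_le: "\<bar>f n\<bar> \<le> m" if "n < N" for n
    unfolding m_def norminfN_def using that by (intro Max_ge) auto
  have "0 \<le> m"
    unfolding m_def by (rule norminfN_nonneg)
  have "(\<Sum>n<N. (f n * g n)\<^sup>2) \<le> (\<Sum>n<N. (m * g n)\<^sup>2)"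
  proof (intro sum_mono)
    fix n assume "n \<in> {..<N}"
    then have "(f n)\<^sup>2 \<le> m\<^sup>2"
      using f_le abs_le_square_iff[of "f n" m] \<open>0 \<le> m\<close> by simp
    then show "(f n * g n)\<^sup>2 \<le> (m * g n)\<^sup>2"
      by (simp add: power_mult_distrib mult_right_mono)
  qed
  then have "L2_set (\<lambda>n. f n * g n) {..<N} \<le> L2_set (\<lambda>n. m * g n) {..<N}"
    unfolding L2_set_def by (rule real_sqrt_le_mono)
  with \<open>0 \<le> m\<close> show ?thesis
    by (simp add: m_def L2_set_right_distrib)
qed

lemma L2_set_orthonormal_comb:
  fixes v :: "'i \<Rightarrow> nat \<Rightarrow> real"
  assumes "finite K"
    and orth: "\<forall>j\<in>K. \<forall>k\<in>K. (\<Sum>n<N. v j n * v k n) = (if j = k then 1 else 0)"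
  shows "L2_set (\<lambda>n. \<Sum>j\<in>K. a j * v j n) {..<N} = L2_set a K"
proof -
  have "(\<Sum>n<N. (\<Sum>j\<in>K. a j * v j n)\<^sup>2) = (\<Sum>j\<in>K. \<Sum>k\<in>K. a j * a k * (\<Sum>n<N. v j n * v k n))"
    by (simp add: power2_eq_square sum_product sum_distrib_left mult_ac sum.swap[of _ "{..<N}"])
  also have "\<dots> = (\<Sum>j\<in>K. \<Sum>k\<in>K. if j = k then a j * a k else 0)"
    by (intro sum.cong refl) (use orth in auto)
  also have "\<dots> = (\<Sum>j\<in>K. (a j)\<^sup>2)"
    using \<open>finite K\<close> by (simp add: power2_eq_square)
  finally show ?thesis
    by (simp add: L2_set_def)
qed

lemma Bessel_ineq_L2_set:
  fixes w :: "'i \<Rightarrow> 'a::real_inner"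
  assumes "finite K"
    and orth: "\<forall>j\<in>K. \<forall>k\<in>K. w j \<bullet> w k = (if j = k then 1 else 0)"
  shows "L2_set (\<lambda>j. w j \<bullet> h) K \<le> norm h"
proof -
  define q where "q = (\<Sum>j\<in>K. (w j \<bullet> h) *\<^sub>R w j)"
  have hq: "h \<bullet> q = (\<Sum>j\<in>K. (w j \<bullet> h)\<^sup>2)"
    by (simp add: q_def inner_sum_right power2_eq_square inner_commute)
  have "q \<bullet> q = (\<Sum>j\<in>K. \<Sum>k\<in>K. (w j \<bullet> h) * ((w k \<bullet> h) * (w k \<bullet> w j)))"
    by (simp add: q_def inner_sum_left inner_sum_right sum_distrib_left mult_ac)
  also have "\<dots> = (\<Sum>j\<in>K. \<Sum>k\<in>K. if j = k then (w j \<bullet> h) * (w k \<bullet> h) else 0)"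
    by (intro sum.cong refl) (use orth in auto)
  also have "\<dots> = (\<Sum>j\<in>K. (w j \<bullet> h)\<^sup>2)"
    using \<open>finite K\<close> by (simp add: power2_eq_square)
  finally have "0 \<le> (h \<bullet> h) - (\<Sum>j\<in>K. (w j \<bullet> h)\<^sup>2)"
    using hq inner_ge_zero[of "h - q"] by (simp add: algebra_simps inner_commute)
  then have "(\<Sum>j\<in>K. (w j \<bullet> h)\<^sup>2) \<le> (norm h)\<^sup>2"
    by (simp add: power2_norm_eq_inner)
  then show ?thesis
    unfolding L2_set_def by (simp add: real_le_lsqrt sum_nonneg)
qed

definition spectral_apply ::
  "nat set \<Rightarrow> (nat \<Rightarrow> real) \<Rightarrow> (nat \<Rightarrow> 'a::real_inner) \<Rightarrow> (nat \<Rightarrow> nat \<Rightarrow> real) \<Rightarrow> 'a \<Rightarrow> nat \<Rightarrow> real"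
  where "spectral_apply K s w v h n = (\<Sum>j\<in>K. s j * v j n * (w j \<bullet> h))"

text \<open>As in \<^const>\<open>svd_decomp\<close>, only the left singular vectors of nonzero singular values
  need to be orthonormal.\<close>
lemma L2_set_spectral_apply_le:
  assumes "finite K"
    and orth: "\<forall>j\<in>K. \<forall>k\<in>K. 0 < s j \<longrightarrow> 0 < s k \<longrightarrow> (\<Sum>n<N. v j n * v k n) = (if j = k then 1 else 0)"
    and s_bound: "\<forall>j\<in>K. 0 \<le> s j \<and> s j \<le> S" and "0 \<le> S"
  shows "L2_set (spectral_apply K s w v h) {..<N} \<le> S * L2_set (\<lambda>j. w j \<bullet> h) K"
proof -
  define K' where "K' = {j\<in>K. 0 < s j}"
  have "finite K'" "K' \<subseteq> K"
    using \<open>finite K\<close> by (auto simp: K'_def)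
  have orth': "\<forall>j\<in>K'. \<forall>k\<in>K'. (\<Sum>n<N. v j n * v k n) = (if j = k then 1 else 0)"
    using orth by (auto simp: K'_def)
  have "spectral_apply K s w v h = (\<lambda>n. \<Sum>j\<in>K'. (s j * (w j \<bullet> h)) * v j n)"
    unfolding spectral_apply_def K'_def
    by (intro ext sum.mono_neutral_cong_right) (use \<open>finite K\<close> s_bound in auto)
  then have "L2_set (spectral_apply K s w v h) {..<N} = L2_set (\<lambda>j. s j * (w j \<bullet> h)) K'"
    by (simp add: L2_set_orthonormal_comb[OF \<open>finite K'\<close> orth'])
  also have "\<dots> \<le> L2_set (\<lambda>j. S * (w j \<bullet> h)) K'"
    unfolding L2_set_def using s_bound \<open>K' \<subseteq> K\<close>
    by (intro real_sqrt_le_mono sum_mono)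
       (auto simp: power_mult_distrib intro!: mult_right_mono power_mono)
  also have "\<dots> = S * L2_set (\<lambda>j. w j \<bullet> h) K'"
    using \<open>0 \<le> S\<close> by (simp add: L2_set_right_distrib)
  also have "\<dots> \<le> S * L2_set (\<lambda>j. w j \<bullet> h) K"
    unfolding L2_set_def using \<open>finite K\<close> \<open>K' \<subseteq> K\<close> \<open>0 \<le> S\<close>
    by (intro mult_left_mono real_sqrt_le_mono sum_mono2) auto
  finally show ?thesis .
qed

lemma sum_mult_spectral_apply_le:
  assumes "finite K"
    and orth_w: "\<forall>j\<in>K. \<forall>k\<in>K. w j \<bullet> w k = (if j = k then 1 else 0)"
    and orth_v: "\<forall>j\<in>K. \<forall>k\<in>K. 0 < s j \<longrightarrow> 0 < s k \<longrightarrow> (\<Sum>n<N. v j n * v k n) = (if j = k then 1 else 0)"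
    and s_bound: "\<forall>j\<in>K. 0 \<le> s j \<and> s j \<le> S" and "0 \<le> S"
  shows "(\<Sum>n<N. z n * spectral_apply K s w v h n) \<le> S * L2_set z {..<N} * norm h"
proof -
  have "(\<Sum>n<N. z n * spectral_apply K s w v h n)
        \<le> L2_set z {..<N} * L2_set (spectral_apply K s w v h) {..<N}"
    by (rule sum_mult_le_L2_set)
  also have "\<dots> \<le> L2_set z {..<N} * (S * norm h)"
  proof (intro mult_left_mono)
    have "L2_set (spectral_apply K s w v h) {..<N} \<le> S * L2_set (\<lambda>j. w j \<bullet> h) K"
      by (rule L2_set_spectral_apply_le[OF assms(1,3-5)])
    also have "\<dots> \<le> S * norm h"
      by (rule mult_left_mono[OF Bessel_ineq_L2_set[OF assms(1,2)] \<open>0 \<le> S\<close>])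
    finally show "L2_set (spectral_apply K s w v h) {..<N} \<le> S * norm h" .
  qed simp
  finally show ?thesis
    by (simp add: mult_ac)
qed

lemma linear_proj_top: "linear (proj_top M w)"
  by (rule linearI)
     (simp_all add: proj_top_def inner_add_right scaleR_add_left sum.distrib scaleR_sum_right)

lemma convex_on_strongly_convex_line:
  fixes F :: "'a::real_normed_vector \<Rightarrow> real"
  assumes "strongly_convex \<alpha> F"
  shows "convex_on UNIV (\<lambda>t. F (b + t *\<^sub>R h) - \<alpha> / 2 * (norm h)\<^sup>2 * t\<^sup>2)"
proof (rule convex_onI)
  fix t u v :: real
  assume t: "0 < t" "t < 1"
  define K where "K = \<alpha> / 2 * (norm h)\<^sup>2"
  define z where "z = (1 - t) * u + t * v"
  have point: "t *\<^sub>R (b + v *\<^sub>R h) + (1 - t) *\<^sub>R (b + u *\<^sub>R h) = b + z *\<^sub>R h"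
    by (simp add: z_def algebra_simps)
  have dist: "(norm ((b + v *\<^sub>R h) - (b + u *\<^sub>R h)))\<^sup>2 = (v - u)\<^sup>2 * (norm h)\<^sup>2"
    by (simp add: power_mult_distrib flip: scaleR_diff_left)
  have "F (b + z *\<^sub>R h)
      \<le> t * F (b + v *\<^sub>R h) + (1 - t) * F (b + u *\<^sub>R h) - K * (t * (1 - t) * (v - u)\<^sup>2)"
    using assms[unfolded strongly_convex_def, rule_format,
        where x = "b + v *\<^sub>R h" and y = "b + u *\<^sub>R h" and t = t] t
    unfolding point dist K_def by (simp add: mult_ac)
  moreover have "K * z\<^sup>2 = (1 - t) * (K * u\<^sup>2) + t * (K * v\<^sup>2) - K * (t * (1 - t) * (v - u)\<^sup>2)"
    unfolding z_def power2_eq_square by (simp add: algebra_simps)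
  ultimately have "F (b + z *\<^sub>R h) - K * z\<^sup>2
      \<le> (1 - t) * (F (b + u *\<^sub>R h) - K * u\<^sup>2) + t * (F (b + v *\<^sub>R h) - K * v\<^sup>2)"
    unfolding right_diff_distrib by linarith
  then show "F (b + ((1 - t) *\<^sub>R u + t *\<^sub>R v) *\<^sub>R h)
        - \<alpha> / 2 * (norm h)\<^sup>2 * ((1 - t) *\<^sub>R u + t *\<^sub>R v)\<^sup>2
      \<le> (1 - t) * (F (b + u *\<^sub>R h) - \<alpha> / 2 * (norm h)\<^sup>2 * u\<^sup>2)
        + t * (F (b + v *\<^sub>R h) - \<alpha> / 2 * (norm h)\<^sup>2 * v\<^sup>2)"
    by (simp add: z_def K_def)
qed simp

lemma strongly_convex_line_deriv_gap:
  fixes F :: "'a::real_normed_vector \<Rightarrow> real"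
  assumes "strongly_convex \<alpha> F"
    and D0: "((\<lambda>t. F (b + t *\<^sub>R h)) has_real_derivative D0) (at 0)"
    and D1: "((\<lambda>t. F (b + t *\<^sub>R h)) has_real_derivative D1) (at 1)"
  shows "\<alpha> * (norm h)\<^sup>2 \<le> D1 - D0"
proof -
  define q where "q t = F (b + t *\<^sub>R h) - \<alpha> / 2 * (norm h)\<^sup>2 * t\<^sup>2" for t
  have q': "(q has_real_derivative D - \<alpha> * (norm h)\<^sup>2 * t) (at t)"
    if "((\<lambda>t. F (b + t *\<^sub>R h)) has_real_derivative D) (at t)" for D t
    unfolding q_def using that by (auto intro!: derivative_eq_intros)
  have convex: "convex_on UNIV q"
    unfolding q_def by (rule convex_on_strongly_convex_line[OF assms(1)])
  have "q 1 - q 0 \<ge> D0 * (1 - 0)"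
    by (rule convex_on_imp_above_tangent[where A = UNIV]) (use convex q'[OF D0] in auto)
  moreover have "q 0 - q 1 \<ge> (D1 - \<alpha> * (norm h)\<^sup>2) * (0 - 1)"
    by (rule convex_on_imp_above_tangent[where A = UNIV]) (use convex q'[OF D1] in auto)
  ultimately show ?thesis
    by simp
qed

lemma has_real_derivative_log_posterior_line:
  fixes p :: "'a::real_inner \<Rightarrow> real" and x :: "nat \<Rightarrow> 'a" and L :: "'a \<Rightarrow> 'a"
  assumes grad: "(p has_derivative (\<lambda>k. g \<bullet> k)) (at (b + t *\<^sub>R h))"
    and pos: "0 < p (b + t *\<^sub>R h)"
    and d1: "\<And>c a. (\<phi> c has_real_derivative \<phi>' c a) (at a)"
    and "linear L"
  shows "((\<lambda>t. ln (p (b + t *\<^sub>R h)) + (\<Sum>n<N. \<phi> (y n) (x n \<bullet> L (b + t *\<^sub>R h))))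
          has_real_derivative
           (g \<bullet> h) / p (b + t *\<^sub>R h) + (\<Sum>n<N. \<phi>' (y n) (x n \<bullet> L (b + t *\<^sub>R h)) * (x n \<bullet> L h)))
         (at t)"
proof -
  have line: "((\<lambda>t. b + t *\<^sub>R h) has_derivative (\<lambda>u. u *\<^sub>R h)) (at t)"
    by (auto intro!: derivative_eq_intros)
  have p_line: "((\<lambda>t. p (b + t *\<^sub>R h)) has_real_derivative g \<bullet> h) (at t)"
    using has_derivative_compose[OF line grad]
    by (simp add: has_field_derivative_def o_def mult.commute[of _ "g \<bullet> h"])
  have log_p: "((\<lambda>t. ln (p (b + t *\<^sub>R h))) has_real_derivative (g \<bullet> h) / p (b + t *\<^sub>R h)) (at t)"
    using DERIV_chain2[OF DERIV_ln[OF pos] p_line] by (simp add: divide_inverse mult.commute)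
  have affine: "x n \<bullet> L (b + u *\<^sub>R h) = x n \<bullet> L b + u * (x n \<bullet> L h)" for n u
    using \<open>linear L\<close> by (simp add: linear_add linear_scale inner_add_right)
  have "((\<lambda>t. \<phi> (y n) (x n \<bullet> L b + t * (x n \<bullet> L h))) has_real_derivative
          \<phi>' (y n) (x n \<bullet> L b + t * (x n \<bullet> L h)) * (x n \<bullet> L h)) (at t)" for n
    by (rule DERIV_chain2[OF d1]) (auto intro!: derivative_eq_intros)
  then show ?thesis
    unfolding affine by (intro DERIV_add log_p DERIV_sum)
qed

lemma dist_sq_MAP_le_gradient_gap:
  fixes p :: "'a::real_inner \<Rightarrow> real" and x :: "nat \<Rightarrow> 'a" and L :: "'a \<Rightarrow> 'a"
  assumes grad: "\<And>\<beta>. (p has_derivative (\<lambda>k. g \<beta> \<bullet> k)) (at \<beta>)"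
    and pos: "\<And>\<beta>. 0 < p \<beta>"
    and d1: "\<And>c a. (\<phi> c has_real_derivative \<phi>' c a) (at a)"
    and "linear L"
    and sconv: "strongly_convex \<alpha> (\<lambda>\<beta>. - (ln (p \<beta>) + (\<Sum>n<N. \<phi> (y n) (x n \<bullet> \<beta>))))"
    and max_exact: "\<And>\<beta>. ln (p \<beta>) + (\<Sum>n<N. \<phi> (y n) (x n \<bullet> \<beta>))
                       \<le> ln (p \<mu>bar) + (\<Sum>n<N. \<phi> (y n) (x n \<bullet> \<mu>bar))"
    and max_approx: "\<And>\<beta>. ln (p \<beta>) + (\<Sum>n<N. \<phi> (y n) (x n \<bullet> L \<beta>))
                       \<le> ln (p \<mu>hat) + (\<Sum>n<N. \<phi> (y n) (x n \<bullet> L \<mu>hat))"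
  shows "\<alpha> * (norm (\<mu>bar - \<mu>hat))\<^sup>2
           \<le> (\<Sum>n<N. \<phi>' (y n) (x n \<bullet> \<mu>hat) * (x n \<bullet> (\<mu>bar - \<mu>hat)))
             - (\<Sum>n<N. \<phi>' (y n) (x n \<bullet> L \<mu>hat) * (x n \<bullet> L (\<mu>bar - \<mu>hat)))"
proof -
  define h where "h = \<mu>bar - \<mu>hat"
  define D where "D L' t = (g (\<mu>hat + t *\<^sub>R h) \<bullet> h) / p (\<mu>hat + t *\<^sub>R h)
      + (\<Sum>n<N. \<phi>' (y n) (x n \<bullet> L' (\<mu>hat + t *\<^sub>R h)) * (x n \<bullet> L' h))" for L' t
  have deriv: "((\<lambda>t. ln (p (\<mu>hat + t *\<^sub>R h)) + (\<Sum>n<N. \<phi> (y n) (x n \<bullet> L' (\<mu>hat + t *\<^sub>R h))))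
      has_real_derivative D L' t) (at t)" if "linear L'" for L' t
    unfolding D_def by (rule has_real_derivative_log_posterior_line[OF grad pos d1 that])
  have exact: "((\<lambda>t. ln (p (\<mu>hat + t *\<^sub>R h)) + (\<Sum>n<N. \<phi> (y n) (x n \<bullet> (\<mu>hat + t *\<^sub>R h))))
      has_real_derivative D id t) (at t)" for t
    using deriv[OF linear_id, of t] by simp
  have "D id 1 = 0"
    by (rule DERIV_local_max[OF exact, of 1]) (use max_exact in \<open>auto simp: h_def\<close>)
  moreover have "D L 0 = 0"
    by (rule DERIV_local_max[OF deriv[OF \<open>linear L\<close>], of 1]) (use max_approx in auto)
  moreover have "\<alpha> * (norm h)\<^sup>2 \<le> - D id 1 - - D id 0"
    by (rule strongly_convex_line_deriv_gap[OF sconv DERIV_minus[OF exact] DERIV_minus[OF exact]])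
  \<comment> \<open>The prior contributes the same term to \<open>D id 0\<close> and \<open>D L 0\<close>.\<close>
  ultimately show ?thesis
    by (simp add: D_def h_def)
qed

lemma between_mean_value:
  fixes f f' :: "real \<Rightarrow> real"
  assumes "\<And>t. (f has_real_derivative f' t) (at t)"
  shows "\<exists>c. between b a c \<and> f a - f b = f' c * (a - b)"
proof (cases a b rule: linorder_cases)
  case less
  then obtain z where "a < z" "z < b" "f b - f a = (b - a) * f' z"
    using MVT2[OF less assms] by blast
  then show ?thesis
    by (intro exI[of _ z]) (auto simp: between_def algebra_simps)
next
  case equal
  then show ?thesis
    by (intro exI[of _ a]) (auto simp: between_def)
next
  case greater
  then obtain z where "b < z" "z < a" "f a - f b = (a - b) * f' z"
    using MVT2[OF greater assms] by blast
  then show ?thesis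
    by (intro exI[of _ z]) (auto simp: between_def algebra_simps)
qed

lemma le_divide_of_square_le:
  fixes d R \<alpha> :: real
  assumes "0 < \<alpha>" "0 \<le> d" "0 \<le> R" "\<alpha> * d\<^sup>2 \<le> R * d"
  shows "d \<le> R / \<alpha>"
proof (cases "d = 0")
  case False
  with assms have "\<alpha> * d \<le> R"
    by (simp add: power2_eq_square mult.assoc[symmetric])
  with assms(1) show ?thesis
    by (simp add: pos_le_divide_eq mult.commute)
qed (use assms in simp)

lemma inner_proj_top_orthonormal:
  assumes orth: "\<forall>j<CARD('d). \<forall>k<CARD('d). w j \<bullet> w k = (if j = k then 1 else 0)"
    and "M \<le> CARD('d)" and "j < CARD('d)"
  shows "w j \<bullet> proj_top M w h = (if j < M then w j \<bullet> (h :: real^'d) else 0)"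
proof -
  have "w j \<bullet> proj_top M w h = (\<Sum>k<M. if k = j then w k \<bullet> h else 0)"
    unfolding proj_top_def inner_sum_right
    by (intro sum.cong refl) (use orth assms(2,3) in auto)
  then show ?thesis
    by simp
qed

context
  fixes N M :: nat and x :: "nat \<Rightarrow> real^'d"
    and s :: "nat \<Rightarrow> real" and w :: "nat \<Rightarrow> real^'d" and v :: "nat \<Rightarrow> nat \<Rightarrow> real"
  assumes svd: "svd_decomp N x s w v" and M_le: "M \<le> CARD('d)"
begin

lemma svd_right_vectors_orthonormal:
  "\<forall>j<CARD('d). \<forall>k<CARD('d). w j \<bullet> w k = (if j = k then 1 else 0)"
  using svd unfolding svd_decomp_def by blast

lemma svd_right_vectors_orthonormal_on:
  "K \<subseteq> {..<CARD('d)} \<Longrightarrow> \<forall>j\<in>K. \<forall>k\<in>K. w j \<bullet> w k = (if j = k then 1 else 0)"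
  using svd_right_vectors_orthonormal by (simp add: subset_iff)

lemma svd_left_vectors_orthonormal_on:
  "K \<subseteq> {..<CARD('d)} \<Longrightarrow>
    \<forall>j\<in>K. \<forall>k\<in>K. 0 < s j \<longrightarrow> 0 < s k \<longrightarrow> (\<Sum>n<N. v j n * v k n) = (if j = k then 1 else 0)"
  using svd unfolding svd_decomp_def by (simp add: subset_iff)

lemma svd_singular_value_nonneg: "j < CARD('d) \<Longrightarrow> 0 \<le> s j"
  using svd unfolding svd_decomp_def by simp

lemma svd_singular_value_antimono: "j \<le> k \<Longrightarrow> k < CARD('d) \<Longrightarrow> s k \<le> s j"
  using svd unfolding svd_decomp_def by simp

lemma inner_svd: "n < N \<Longrightarrow> x n \<bullet> h = spectral_apply {..<CARD('d)} s w v h n"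
  using svd unfolding svd_decomp_def spectral_apply_def
  by (auto simp: inner_sum_left mult_ac)

lemma inner_proj_top_svd: "n < N \<Longrightarrow> x n \<bullet> proj_top M w h = spectral_apply {..<M} s w v h n"
proof -
  assume "n < N"
  have "x n \<bullet> proj_top M w h
        = (\<Sum>j<CARD('d). if j < M then s j * v j n * (w j \<bullet> h) else 0)"
    unfolding inner_svd[OF \<open>n < N\<close>] spectral_apply_def
    by (intro sum.cong refl)
       (simp add: inner_proj_top_orthonormal[OF svd_right_vectors_orthonormal M_le])
  also have "\<dots> = spectral_apply {..<M} s w v h n"
    unfolding spectral_apply_def
    by (rule sum.mono_neutral_cong_right) (use M_le in auto)
  finally show ?thesis .
qed

lemma inner_diff_proj_top_svd:
  "n < N \<Longrightarrow> x n \<bullet> h - x n \<bullet> proj_top M w h = spectral_apply {M..<CARD('d)} s w v h n"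
proof -
  assume "n < N"
  have split: "sum f {..<CARD('d)} = sum f {..<M} + sum f {M..<CARD('d)}" for f :: "nat \<Rightarrow> real"
    using sum.atLeastLessThan_concat[of 0 M "CARD('d)" f] M_le by (simp add: atLeast0LessThan)
  show ?thesis
    unfolding inner_proj_top_svd[OF \<open>n < N\<close>] inner_svd[OF \<open>n < N\<close>, of h] spectral_apply_def split
    by simp
qed

lemma svd_leading_bound: "\<forall>j\<in>{..<M}. 0 \<le> s j \<and> s j \<le> s 0"
  using M_le svd_singular_value_nonneg svd_singular_value_antimono[of 0] by simp

lemma svd_trailing_bound:
  "\<forall>j\<in>{M..<CARD('d)}. 0 \<le> s j \<and> s j \<le> (if M < CARD('d) then s M else 0)"
  using svd_singular_value_nonneg svd_singular_value_antimono[of M] by simp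

lemma svd_trailing_nonneg: "0 \<le> (if M < CARD('d) then s M else 0)"
  using svd_singular_value_nonneg by simp

lemma sum_mult_inner_proj_top_le:
  "(\<Sum>n<N. z n * (x n \<bullet> proj_top M w h)) \<le> s 0 * L2_set z {..<N} * norm h"
proof -
  have "(\<Sum>n<N. z n * (x n \<bullet> proj_top M w h)) = (\<Sum>n<N. z n * spectral_apply {..<M} s w v h n)"
    by (simp add: inner_proj_top_svd)
  also have "\<dots> \<le> s 0 * L2_set z {..<N} * norm h"
    using M_le svd_singular_value_nonneg[of 0]
    by (intro sum_mult_spectral_apply_le[OF _ svd_right_vectors_orthonormal_on
          svd_left_vectors_orthonormal_on svd_leading_bound]) auto
  finally show ?thesis .
qed

lemma sum_mult_inner_diff_proj_top_le:
  "(\<Sum>n<N. z n * (x n \<bullet> h - x n \<bullet> proj_top M w h))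
    \<le> (if M < CARD('d) then s M else 0) * L2_set z {..<N} * norm h"
proof -
  have "(\<Sum>n<N. z n * (x n \<bullet> h - x n \<bullet> proj_top M w h))
        = (\<Sum>n<N. z n * spectral_apply {M..<CARD('d)} s w v h n)"
    by (simp add: inner_diff_proj_top_svd)
  also have "\<dots> \<le> (if M < CARD('d) then s M else 0) * L2_set z {..<N} * norm h"
    by (intro sum_mult_spectral_apply_le[OF _ svd_right_vectors_orthonormal_on
          svd_left_vectors_orthonormal_on svd_trailing_bound svd_trailing_nonneg]) auto
  finally show ?thesis .
qed

lemma L2_set_inner_diff_proj_top_le:
  "L2_set (\<lambda>n. x n \<bullet> \<beta> - x n \<bullet> proj_top M w \<beta>) {..<N}
    \<le> (if M < CARD('d) then s M else 0) * norm_Ubar_T M w \<beta>"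
proof -
  have "L2_set (\<lambda>n. x n \<bullet> \<beta> - x n \<bullet> proj_top M w \<beta>) {..<N}
        = L2_set (spectral_apply {M..<CARD('d)} s w v \<beta>) {..<N}"
    by (rule L2_set_cong) (simp_all add: inner_diff_proj_top_svd)
  also have "\<dots> \<le> (if M < CARD('d) then s M else 0) * norm_Ubar_T M w \<beta>"
    unfolding norm_Ubar_T_eq_L2_set
    by (intro L2_set_spectral_apply_le[OF _ svd_left_vectors_orthonormal_on svd_trailing_bound
          svd_trailing_nonneg]) auto
  finally show ?thesis .
qed

lemma likelihood_gradient_gap_le:
  assumes mvt: "\<And>n. n < N \<Longrightarrow> c n - d n = q n * (x n \<bullet> \<mu> - x n \<bullet> proj_top M w \<mu>)"
  shows "(\<Sum>n<N. c n * (x n \<bullet> h)) - (\<Sum>n<N. d n * (x n \<bullet> proj_top M w h))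
    \<le> (if M < CARD('d) then s M else 0)
        * (L2_set c {..<N} + s 0 * norm_Ubar_T M w \<mu> * norminfN N q) * norm h"
proof -
  define S where "S = (if M < CARD('d) then s M else 0)"
  define r where "r n = x n \<bullet> \<mu> - x n \<bullet> proj_top M w \<mu>" for n
  have "(\<Sum>n<N. c n * (x n \<bullet> h)) - (\<Sum>n<N. d n * (x n \<bullet> proj_top M w h))
        = (\<Sum>n<N. c n * (x n \<bullet> h - x n \<bullet> proj_top M w h))
          + (\<Sum>n<N. (q n * r n) * (x n \<bullet> proj_top M w h))"
  proof -
    have "d n = c n - q n * r n" if "n < N" for n
      using mvt[OF that] by (simp add: r_def)
    then have "(\<Sum>n<N. d n * (x n \<bullet> proj_top M w h))
        = (\<Sum>n<N. c n * (x n \<bullet> proj_top M w h) - (q n * r n) * (x n \<bullet> proj_top M w h))"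
      by (intro sum.cong) (simp_all add: left_diff_distrib)
    then show ?thesis
      by (simp add: sum_subtractf right_diff_distrib)
  qed
  also have "\<dots> \<le> S * L2_set c {..<N} * norm h + s 0 * L2_set (\<lambda>n. q n * r n) {..<N} * norm h"
    unfolding S_def by (intro add_mono sum_mult_inner_diff_proj_top_le sum_mult_inner_proj_top_le)
  also have "\<dots> \<le> S * L2_set c {..<N} * norm h
                    + s 0 * (norminfN N q * (S * norm_Ubar_T M w \<mu>)) * norm h"
  proof -
    have "L2_set (\<lambda>n. q n * r n) {..<N} \<le> norminfN N q * L2_set r {..<N}"
      by (rule L2_set_mult_le_norminfN)
    also have "\<dots> \<le> norminfN N q * (S * norm_Ubar_T M w \<mu>)"
      unfolding S_def r_def by (intro mult_left_mono norminfN_nonneg L2_set_inner_diff_proj_top_le)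
    finally show ?thesis
      using svd_singular_value_nonneg[of 0]
      by (intro add_left_mono mult_right_mono mult_left_mono) auto
  qed
  finally show ?thesis
    by (simp add: S_def algebra_simps)
qed

end

theorem mainTheorem10:
  fixes N M :: nat
    and x :: "nat \<Rightarrow> real^'d"
    and y :: "nat \<Rightarrow> 'y"
    and s :: "nat \<Rightarrow> real" and w :: "nat \<Rightarrow> real^'d" and v :: "nat \<Rightarrow> nat \<Rightarrow> real"
    and \<phi> \<phi>' \<phi>'' :: "'y \<Rightarrow> real \<Rightarrow> real"
    and p :: "real^'d \<Rightarrow> real"
    and \<alpha> :: real
    and \<mu>bar \<mu>hat :: "real^'d"
  assumes svd: "svd_decomp N x s w v"
    and M: "M \<le> CARD('d)"
    and d1: "\<And>b a. (\<phi> b has_real_derivative \<phi>' b a) (at a)"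
    and d2: "\<And>b a. (\<phi>' b has_real_derivative \<phi>'' b a) (at a)"
    and ppos: "\<And>\<beta>. p \<beta> > 0"
    and ptwice: "\<exists>g :: real^'d \<Rightarrow> real^'d.
                   (\<forall>\<beta>. (p has_derivative (\<lambda>h. g \<beta> \<bullet> h)) (at \<beta>)) \<and> (\<forall>\<beta>. g differentiable (at \<beta>))"
    and alpha: "\<alpha> > 0"
    and sconv: "strongly_convex \<alpha> (\<lambda>\<beta>. - (ln (p \<beta>) + (\<Sum>n<N. \<phi> (y n) (x n \<bullet> \<beta>))))"
    and mubar: "\<And>\<beta>. ln (p \<beta>) + (\<Sum>n<N. \<phi> (y n) (x n \<bullet> \<beta>))
                   \<le> ln (p \<mu>bar) + (\<Sum>n<N. \<phi> (y n) (x n \<bullet> \<mu>bar))"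
    and muhat: "\<And>\<beta>. ln (p \<beta>) + (\<Sum>n<N. \<phi> (y n) (x n \<bullet> proj_top M w \<beta>))
                   \<le> ln (p \<mu>hat) + (\<Sum>n<N. \<phi> (y n) (x n \<bullet> proj_top M w \<mu>hat))"
  shows "\<exists>A :: nat \<Rightarrow> real.
           (\<forall>n<N. between (x n \<bullet> proj_top M w \<mu>hat) (x n \<bullet> \<mu>hat) (A n)) \<and>
           norm (\<mu>hat - \<mu>bar)
             \<le> (if M < CARD('d) then s M else 0) *
                 (norm2N N (\<lambda>n. \<phi>' (y n) (x n \<bullet> \<mu>hat))
                  + s 0 * norm_Ubar_T M w \<mu>hat * norminfN N (\<lambda>n. \<phi>'' (y n) (A n))) / \<alpha>"
proof -
  obtain g where grad: "\<And>\<beta>. (p has_derivative (\<lambda>h. g \<beta> \<bullet> h)) (at \<beta>)"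
    using ptwice by blast
  define P where "P = proj_top M w"
  have "\<forall>n. \<exists>a. between (x n \<bullet> P \<mu>hat) (x n \<bullet> \<mu>hat) a \<and>
      \<phi>' (y n) (x n \<bullet> \<mu>hat) - \<phi>' (y n) (x n \<bullet> P \<mu>hat) = \<phi>'' (y n) a * (x n \<bullet> \<mu>hat - x n \<bullet> P \<mu>hat)"
    using between_mean_value[OF d2] by blast
  then obtain A where A_between: "\<And>n. between (x n \<bullet> P \<mu>hat) (x n \<bullet> \<mu>hat) (A n)"
    and A_mvt: "\<And>n. \<phi>' (y n) (x n \<bullet> \<mu>hat) - \<phi>' (y n) (x n \<bullet> P \<mu>hat)
                    = \<phi>'' (y n) (A n) * (x n \<bullet> \<mu>hat - x n \<bullet> P \<mu>hat)"
    by metis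
  define R where "R = (if M < CARD('d) then s M else 0)
      * (norm2N N (\<lambda>n. \<phi>' (y n) (x n \<bullet> \<mu>hat))
         + s 0 * norm_Ubar_T M w \<mu>hat * norminfN N (\<lambda>n. \<phi>'' (y n) (A n)))"
  have "\<alpha> * (norm (\<mu>bar - \<mu>hat))\<^sup>2
        \<le> (\<Sum>n<N. \<phi>' (y n) (x n \<bullet> \<mu>hat) * (x n \<bullet> (\<mu>bar - \<mu>hat)))
          - (\<Sum>n<N. \<phi>' (y n) (x n \<bullet> P \<mu>hat) * (x n \<bullet> P (\<mu>bar - \<mu>hat)))"
    unfolding P_def
    by (rule dist_sq_MAP_le_gradient_gap[where \<phi> = \<phi> and \<phi>' = \<phi>' and y = y and x = x,
          OF grad ppos d1 linear_proj_top sconv mubar muhat])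
  also have "\<dots> \<le> R * norm (\<mu>bar - \<mu>hat)"
    unfolding R_def P_def norm2N_eq_L2_set
    by (rule likelihood_gradient_gap_le[OF svd M A_mvt[unfolded P_def]])
  moreover have "0 \<le> R"
    using svd_trailing_nonneg[OF svd M] svd_singular_value_nonneg[OF svd M, of 0]
    unfolding R_def norm2N_eq_L2_set norm_Ubar_T_eq_L2_set
    by (intro mult_nonneg_nonneg add_nonneg_nonneg L2_set_nonneg norminfN_nonneg) auto
  ultimately have "norm (\<mu>hat - \<mu>bar) \<le> R / \<alpha>"
    using alpha by (intro le_divide_of_square_le) (auto simp: norm_minus_commute)
  with A_between show ?thesis
    unfolding R_def P_def by blast
qed

end
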